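(* Let $k\geq 2$ be an integer. If $G$ is a cactus on $n$ vertices, then $\alpha_k(G)\geq \Big\lfloor\frac{k}{k+1}\,n\Big\rfloor+1$.
   Context: All graphs are finite and simple, with nonempty vertex set. For a graph $G$, a $k$-sparse set is a set of vertices inducing a subgraph of maximum degree at most $k$, and $\alpha_k(G)$ denotes the maximum size of a $k$-sparse set in $G$. A cactus is a graph (not necessarily connected) in which every block is a cycle, a single edge, or a single vertex. *)

theory Defs
  imports Main
begin

definition graph :: "'a set \<Rightarrow> 'a set set \<Rightarrow> bool" where
  "graph V E \<longleftrightarrow> finite V \<and> V \<noteq> {} \<and> (\<forall>e\<in>E. e \<subseteq> V \<and> card e = 2)"

definition subgraph :: "'a set \<Rightarrow> 'a set set \<Rightarrow> 'a set \<Rightarrow> 'a set set \<Rightarrow> bool" where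
  "subgraph W F V E \<longleftrightarrow> W \<subseteq> V \<and> F \<subseteq> E \<and> (\<forall>e\<in>F. e \<subseteq> W)"

definition connected_graph :: "'a set \<Rightarrow> 'a set set \<Rightarrow> bool" where
  "connected_graph W F \<longleftrightarrow>
     (\<forall>u\<in>W. \<forall>v\<in>W. (\<lambda>x y. {x, y} \<in> F)\<^sup>*\<^sup>* u v)"

definition del_vertex_edges :: "'a \<Rightarrow> 'a set set \<Rightarrow> 'a set set" where
  "del_vertex_edges v F = {e\<in>F. v \<notin> e}"

definition nonseparable :: "'a set \<Rightarrow> 'a set set \<Rightarrow> bool" where
  "nonseparable W F \<longleftrightarrow> W \<noteq> {} \<and> connected_graph W F \<and>
     (\<forall>v\<in>W. connected_graph (W - {v}) (del_vertex_edges v F))"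

definition block :: "'a set \<Rightarrow> 'a set set \<Rightarrow> 'a set \<Rightarrow> 'a set set \<Rightarrow> bool" where
  "block W F V E \<longleftrightarrow> subgraph W F V E \<and> nonseparable W F \<and>
     (\<forall>W' F'. subgraph W' F' V E \<and> nonseparable W' F' \<and> W \<subseteq> W' \<and> F \<subseteq> F'
        \<longrightarrow> W' = W \<and> F' = F)"

definition degree :: "'a set set \<Rightarrow> 'a \<Rightarrow> nat" where
  "degree F v = card {u. {v, u} \<in> F}"

definition is_cycle_graph :: "'a set \<Rightarrow> 'a set set \<Rightarrow> bool" where
  "is_cycle_graph W F \<longleftrightarrow> card W \<ge> 3 \<and> connected_graph W F \<and> (\<forall>v\<in>W. degree F v = 2)"

definition is_single_edge :: "'a set \<Rightarrow> 'a set set \<Rightarrow> bool" where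
  "is_single_edge W F \<longleftrightarrow> card W = 2 \<and> F = {W}"

definition is_single_vertex :: "'a set \<Rightarrow> 'a set set \<Rightarrow> bool" where
  "is_single_vertex W F \<longleftrightarrow> card W = 1 \<and> F = {}"

definition cactus :: "'a set \<Rightarrow> 'a set set \<Rightarrow> bool" where
  "cactus V E \<longleftrightarrow> graph V E \<and>
     (\<forall>W F. block W F V E \<longrightarrow>
        is_cycle_graph W F \<or> is_single_edge W F \<or> is_single_vertex W F)"

definition k_sparse :: "nat \<Rightarrow> 'a set \<Rightarrow> 'a set set \<Rightarrow> 'a set \<Rightarrow> bool" where
  "k_sparse k V E S \<longleftrightarrow> S \<subseteq> V \<and> (\<forall>v\<in>S. card {u\<in>S. {v, u} \<in> E} \<le> k)"

definition alpha_k :: "nat \<Rightarrow> 'a set \<Rightarrow> 'a set set \<Rightarrow> nat" where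
  "alpha_k k V E = Max (card ` {S. k_sparse k V E S})"

end

theory Submission
  imports Defs "HOL-Library.Product_Order"
begin

text \<open>The proof strengthens the statement so that it can be proved by induction on the vertex
  set U: every vertex x gets a capacity c x \<le> k, and we look for a set D whose deletion leaves
  each remaining x with at most c x neighbours, at the cost (k + 1) |D| + \<Sum>c < (k + 1) |U|.
  For c = k this gives (k + 1) |D| < n, which is the claim. Capacities allow local reductions
  that delete a few vertices and lower the capacities of their surviving neighbours: split a
  disconnected graph, delete a vertex of capacity 0, cut off a pendant part hanging at a single
  vertex, and handle a vertex of capacity 1 and degree 2 together with its neighbours.
  The only property of cacti the induction uses is that a vertex has at most two neighbours in
  any connected set of vertices avoiding it; this forces all degrees in an end block to be at
  most 2, which is where the last reduction applies.\<close>

section \<open>Connectivity inside a vertex set\<close>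

definition induced_edges :: "'a set set \<Rightarrow> 'a set \<Rightarrow> 'a set set" where
  "induced_edges E A = {e \<in> E. e \<subseteq> A}"

definition reach_in :: "'a set set \<Rightarrow> 'a set \<Rightarrow> 'a \<Rightarrow> 'a \<Rightarrow> bool" where
  "reach_in E A = (\<lambda>x y. {x, y} \<in> induced_edges E A)\<^sup>*\<^sup>*"

definition component_in :: "'a set set \<Rightarrow> 'a set \<Rightarrow> 'a \<Rightarrow> 'a set" where
  "component_in E A u = {v. reach_in E A u v}"

abbreviation connected_in :: "'a set set \<Rightarrow> 'a set \<Rightarrow> bool" where
  "connected_in E A \<equiv> connected_graph A (induced_edges E A)"

definition nbrs :: "'a set set \<Rightarrow> 'a \<Rightarrow> 'a set" where
  "nbrs E x = {y. {x, y} \<in> E}"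

lemma doubleton_in_induced_edges [simp]:
  "{x, y} \<in> induced_edges E A \<longleftrightarrow> {x, y} \<in> E \<and> x \<in> A \<and> y \<in> A"
  by (auto simp: induced_edges_def)

lemma del_vertex_edges_induced_edges:
  "del_vertex_edges v (induced_edges E A) = induced_edges E (A - {v})"
  by (auto simp: del_vertex_edges_def induced_edges_def)

lemma mem_component_in [simp]: "v \<in> component_in E A u \<longleftrightarrow> reach_in E A u v"
  by (simp add: component_in_def)

lemma connected_in_iff: "connected_in E A \<longleftrightarrow> (\<forall>u\<in>A. \<forall>v\<in>A. reach_in E A u v)"
  by (simp add: connected_graph_def reach_in_def)

lemma reach_in_refl [simp]: "reach_in E A u u"
  by (simp add: reach_in_def)

lemma reach_in_trans [trans]: "reach_in E A u v \<Longrightarrow> reach_in E A v w \<Longrightarrow> reach_in E A u w"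
  unfolding reach_in_def by (rule rtranclp_trans)

lemma reach_in_sym: "reach_in E A u v \<Longrightarrow> reach_in E A v u"
proof -
  have "symp (\<lambda>x y. {x, y} \<in> induced_edges E A)"
    by (rule sympI) (simp add: insert_commute)
  then show "reach_in E A u v \<Longrightarrow> reach_in E A v u"
    unfolding reach_in_def by (blast dest: sympD[OF symp_rtranclp])
qed

lemma reach_in_edge: "{u, v} \<in> E \<Longrightarrow> u \<in> A \<Longrightarrow> v \<in> A \<Longrightarrow> reach_in E A u v"
  unfolding reach_in_def by (rule r_into_rtranclp) simp

lemma reach_in_closed: "reach_in E A u v \<Longrightarrow> u \<in> A \<Longrightarrow> v \<in> A"
  unfolding reach_in_def by (induction rule: rtranclp_induct) auto

lemma reach_in_exists_nbr:
  assumes "reach_in E A x y" "x \<noteq> y"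
  shows "\<exists>z\<in>A. {x, z} \<in> E"
  using assms unfolding reach_in_def by (cases rule: converse_rtranclpE) auto

lemma connected_in_nbrs_nonempty:
  assumes "connected_in E A" "x \<in> A" "y \<in> A" "x \<noteq> y"
  shows "nbrs E x \<inter> A \<noteq> {}"
  using assms reach_in_exists_nbr[of E A x y] by (auto simp: connected_in_iff nbrs_def)

lemma component_in_subset: "u \<in> A \<Longrightarrow> component_in E A u \<subseteq> A"
  using reach_in_closed by fastforce

lemma reach_in_mono: "A \<subseteq> B \<Longrightarrow> reach_in E A u v \<Longrightarrow> reach_in E B u v"
  unfolding reach_in_def
  by (erule rtranclp_mono[THEN predicate2D, rotated]) auto

lemma reach_in_restrict:
  assumes "reach_in E A u v" "component_in E A u \<subseteq> B"
  shows "reach_in E B u v"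
  using assms(1) unfolding reach_in_def
proof (induction rule: rtranclp_induct)
  case (step x y)
  have "reach_in E A u y"
    using step.hyps(1,2) unfolding reach_in_def by (rule rtranclp.rtrancl_into_rtrancl)
  moreover have "reach_in E A u x"
    using step.hyps(1) unfolding reach_in_def .
  ultimately have "x \<in> B" "y \<in> B" using assms(2) by auto
  then show ?case using step by (auto intro: rtranclp.rtrancl_into_rtrancl)
qed simp

lemma connected_in_hub:
  assumes "\<And>u. u \<in> A \<Longrightarrow> reach_in E A u h"
  shows "connected_in E A"
  unfolding connected_in_iff using assms reach_in_sym reach_in_trans by metis

lemma connected_in_insert:
  assumes "\<And>u. u \<in> B \<Longrightarrow> \<exists>t. reach_in E B u t \<and> {t, x} \<in> E"
  shows "connected_in E (insert x B)"
proof (rule connected_in_hub)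
  fix u assume "u \<in> insert x B"
  then show "reach_in E (insert x B) u x"
  proof
    assume u: "u \<in> B"
    then obtain t where ut: "reach_in E B u t" and "{t, x} \<in> E" using assms by blast
    moreover have "t \<in> B" using reach_in_closed[OF ut u] .
    ultimately show ?thesis
      using reach_in_trans[OF reach_in_mono[OF _ ut] reach_in_edge] by blast
  qed simp
qed

lemma component_in_edge:
  assumes "u \<in> A" "x \<in> component_in E A u" "y \<in> A" "{x, y} \<in> E"
  shows "y \<in> component_in E A u"
proof -
  have ux: "reach_in E A u x" using assms(2) by simp
  also have "reach_in E A x y" using reach_in_closed[OF ux assms(1)] assms(3,4) by (intro reach_in_edge)
  finally show ?thesis by simp
qed

lemma not_connected_in_outside_component:
  assumes "\<not> connected_in E A" "d \<in> A"
  obtains c where "c \<in> A" "c \<notin> component_in E A d"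
proof -
  have "\<not> (\<forall>u\<in>A. reach_in E A u d)"
  proof
    assume "\<forall>u\<in>A. reach_in E A u d"
    then have "connected_in E A" by (intro connected_in_hub) blast
    then show False using assms(1) by blast
  qed
  then obtain c where "c \<in> A" "\<not> reach_in E A c d" by blast
  then show ?thesis by (intro that[of c]) (auto dest: reach_in_sym)
qed

lemma reach_in_nbr_of_removed:
  assumes "connected_in E B" "y \<in> B" "w \<in> B - {y}"
  shows "\<exists>t. reach_in E (B - {y}) w t \<and> {t, y} \<in> E"
proof -
  have "reach_in E (B - {y}) w s \<or> (\<exists>t. reach_in E (B - {y}) w t \<and> {t, y} \<in> E)"
    if "reach_in E B w s" for s
    using that unfolding reach_in_def[of E B]
  proof (induction rule: rtranclp_induct)
    case (step p q)
    then show ?case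
      using reach_in_closed[of E "B - {y}" w p] assms(3)
      by (cases "q = y") (auto intro: reach_in_trans reach_in_edge)
  qed simp
  moreover have "reach_in E B w y" using assms by (auto simp: connected_in_iff)
  moreover have "\<not> reach_in E (B - {y}) w y" using reach_in_closed assms(3) by fastforce
  ultimately show ?thesis by blast
qed

lemma connected_in_Diff_component:
  assumes B: "connected_in E B" and y: "y \<in> B" and z: "z \<in> B - {y}"
  shows "connected_in E (B - component_in E (B - {y}) z)"
    (is "connected_in E (B - ?K)")
proof (rule connected_in_hub)
  have yK: "y \<notin> ?K" using reach_in_closed z by fastforce
  fix w assume w: "w \<in> B - ?K"
  show "reach_in E (B - ?K) w y"
  proof (cases "w = y")
    case False
    then obtain t where wt: "reach_in E (B - {y}) w t" and ty: "{t, y} \<in> E"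
      using reach_in_nbr_of_removed[OF B y] w by blast
    have comp_w: "component_in E (B - {y}) w \<subseteq> B - ?K"
    proof
      fix s assume "s \<in> component_in E (B - {y}) w"
      then have ws: "reach_in E (B - {y}) w s" by simp
      then have "s \<in> B - {y}" using reach_in_closed[OF ws] w False by blast
      moreover have "s \<notin> ?K"
      proof
        assume "s \<in> ?K"
        then have "reach_in E (B - {y}) z w"
          using reach_in_trans[OF _ reach_in_sym[OF ws]] by simp
        then show False using w by simp
      qed
      ultimately show "s \<in> B - ?K" by blast
    qed
    have "reach_in E (B - ?K) w t" using wt comp_w by (rule reach_in_restrict)
    also have "reach_in E (B - ?K) t y"
      using ty yK y comp_w wt by (intro reach_in_edge) auto
    finally show ?thesis .
  qed simp
qed

lemma component_in_Diff_grows: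
  assumes U: "connected_in E U" and v: "v \<in> U" and d: "d \<in> U - {v}"
    and x: "x \<in> U - {v}" "x \<notin> component_in E (U - {v}) d"
  shows "insert v (component_in E (U - {v}) d) \<subseteq> component_in E (U - {x}) v"
proof
  define Dv where "Dv = component_in E (U - {v}) d"
  have Dv_U: "Dv \<subseteq> U - {v}" unfolding Dv_def using d by (rule component_in_subset)
  fix t assume "t \<in> insert v Dv"
  moreover have "reach_in E (U - {x}) v t" if t: "t \<in> Dv"
  proof -
    have "t \<in> U - {v}" using t Dv_U by blast
    then obtain z where tz: "reach_in E (U - {v}) t z" and zv: "{z, v} \<in> E"
      using reach_in_nbr_of_removed[OF U v] by blast
    have "component_in E (U - {v}) z \<subseteq> Dv"
      using t reach_in_trans[OF reach_in_trans[OF _ tz]] by (auto simp: Dv_def)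
    then have sub: "component_in E (U - {v}) z \<subseteq> U - {x}"
      using x Dv_U by (auto simp: Dv_def)
    have "z \<in> U - {x}" using sub by (auto simp: subset_iff)
    then have "reach_in E (U - {x}) v z"
      using zv v x by (intro reach_in_edge) (auto simp: insert_commute)
    also have "reach_in E (U - {x}) z t" by (rule reach_in_restrict[OF reach_in_sym[OF tz] sub])
    finally show ?thesis .
  qed
  ultimately show "t \<in> component_in E (U - {x}) v" by auto
qed

text \<open>Choose a cut vertex v and a component of U - v of maximum size; any other component
  C of U - v contains no cut vertex x, since the component of v in U - x would be larger.\<close>
lemma exists_end_component:
  assumes fin: "finite U" and U: "connected_in E U"
    and v0: "v0 \<in> U" "\<not> connected_in E (U - {v0})"
  obtains v C where "v \<in> U" "C \<noteq> {}" "C \<subseteq> U - {v}"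
    "\<And>x y. x \<in> C \<Longrightarrow> y \<in> U \<Longrightarrow> {x, y} \<in> E \<Longrightarrow> y \<in> insert v C"
    "\<And>x. x \<in> C \<Longrightarrow> connected_in E (U - {x})"
proof -
  define P where
    "P p \<longleftrightarrow> fst p \<in> U \<and> snd p \<in> U - {fst p} \<and> \<not> connected_in E (U - {fst p})" for p
  define f where "f p = card (component_in E (U - {fst p}) (snd p))" for p :: "'a \<times> 'a"
  have f_le: "f (v, d) \<le> card U" if "d \<in> U - {v}" for v d
    unfolding f_def using component_in_subset[OF that] fin by (simp add: card_mono subset_Diff_insert)
  obtain d0 where "d0 \<in> U - {v0}" using v0 by (auto simp: connected_in_iff)
  then have "P (v0, d0)" using v0 by (simp add: P_def)
  moreover have "f p < card U + 1" if "P p" for p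
    using f_le[of "snd p" "fst p"] that by (simp add: P_def)
  ultimately obtain p where "P p" and max: "\<And>q. P q \<Longrightarrow> f q \<le> f p"
    using ex_has_greatest_nat[of P "(v0, d0)" f "card U + 1"] by blast
  obtain v d where p: "p = (v, d)" by fastforce
  have v: "v \<in> U" and d: "d \<in> U - {v}" and cut: "\<not> connected_in E (U - {v})"
    using \<open>P p\<close> by (auto simp: P_def p)
  define Dv where "Dv = component_in E (U - {v}) d"
  have Dv_U: "Dv \<subseteq> U - {v}" unfolding Dv_def using d by (rule component_in_subset)
  obtain c0 where c0: "c0 \<in> U - {v}" "c0 \<notin> Dv"
    using not_connected_in_outside_component[OF cut d] by (auto simp: Dv_def)
  define C where "C = component_in E (U - {v}) c0"
  have C_U: "C \<subseteq> U - {v}" unfolding C_def using c0(1) by (rule component_in_subset)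
  have "connected_in E (U - {x})" if x: "x \<in> C" for x
  proof (rule ccontr)
    assume "\<not> connected_in E (U - {x})"
    then have "P (x, v)" using x C_U v by (auto simp: P_def)
    have "x \<notin> Dv"
    proof
      assume "x \<in> Dv"
      then have "reach_in E (U - {v}) d x" by (simp add: Dv_def)
      also have "reach_in E (U - {v}) x c0" using x by (simp add: C_def) (rule reach_in_sym)
      finally show False using c0 by (simp add: Dv_def)
    qed
    moreover have "component_in E (U - {x}) v \<subseteq> U"
      using component_in_subset[of v "U - {x}" E] x C_U v by blast
    ultimately have "card (insert v Dv) \<le> f (x, v)"
      using component_in_Diff_grows[OF U v d, of x] x C_U fin
      unfolding f_def Dv_def by (intro card_mono) (auto intro: finite_subset)
    also have "\<dots> \<le> card Dv" using max[OF \<open>P (x, v)\<close>] by (simp add: f_def Dv_def p)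
    finally have "card (insert v Dv) \<le> card Dv" .
    moreover have "finite Dv" "v \<notin> Dv" using Dv_U fin finite_subset by auto
    ultimately show False by simp
  qed
  moreover have "y \<in> insert v C" if "x \<in> C" "y \<in> U" "{x, y} \<in> E" for x y
    using component_in_edge[OF c0(1), where x = x and y = y] that by (auto simp: C_def)
  moreover have "c0 \<in> C" by (simp add: C_def)
  ultimately show ?thesis using that v C_U by blast
qed

section \<open>Blocks of cacti\<close>

lemma nonseparable_induced_iff:
  "nonseparable W (induced_edges E W) \<longleftrightarrow>
     W \<noteq> {} \<and> connected_in E W \<and> (\<forall>v\<in>W. connected_in E (W - {v}))"
  by (simp add: nonseparable_def del_vertex_edges_induced_edges)

lemma minimal_connected_Diff_meets:
  assumes B: "connected_in E B" "T \<subseteq> B" and y: "y \<in> B" and z: "z \<in> B - {y}"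
    and min: "\<And>B'. T \<subseteq> B' \<Longrightarrow> B' \<subset> B \<Longrightarrow> \<not> connected_in E B'"
  shows "\<exists>t\<in>T - {y}. reach_in E (B - {y}) z t"
proof (rule ccontr)
  define K where "K = component_in E (B - {y}) z"
  assume "\<not> ?thesis"
  then have "T \<subseteq> B - K" using B(2) reach_in_closed z by (fastforce simp: K_def)
  moreover have "z \<in> K" by (simp add: K_def)
  then have "B - K \<subset> B" using z by blast
  ultimately show False
    using min connected_in_Diff_component[OF B(1) y z] by (simp add: K_def)
qed

text \<open>B is a smallest connected set containing T; by the previous lemma every component of
  B - y meets T and is therefore joined to x.\<close>
lemma nonseparable_insert_minimal_connected:
  assumes fin: "finite A" and A: "connected_in E A" and T: "T \<subseteq> A" "T \<noteq> {}"
    and x: "x \<notin> A" and xT: "\<And>t. t \<in> T \<Longrightarrow> {x, t} \<in> E"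
  obtains B where "T \<subseteq> B" "B \<subseteq> A" "nonseparable (insert x B) (induced_edges E (insert x B))"
proof -
  define S where "S = {B. T \<subseteq> B \<and> B \<subseteq> A \<and> connected_in E B}"
  have "finite S" using fin by (simp add: S_def finite_subset[of _ "Pow A"] subset_iff)
  moreover have "A \<in> S" using A T by (simp add: S_def)
  ultimately obtain B where "B \<in> S" and min: "\<forall>B'\<in>S. B' \<le> B \<longrightarrow> B = B'"
    using finite_has_minimal2 by blast
  then have TB: "T \<subseteq> B" and BA: "B \<subseteq> A" and B: "connected_in E B" by (auto simp: S_def)
  obtain t where t: "t \<in> T" using T by blast
  have "connected_in E (insert x B - {y})" if y: "y \<in> insert x B" for y
  proof (cases "y = x")
    case True
    then have "insert x B - {y} = B" using x BA by auto
    then show ?thesis using B by simp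
  next
    case False
    then have yB: "y \<in> B" and eq: "insert x B - {y} = insert x (B - {y})" using y by auto
    have "\<not> connected_in E B'" if "T \<subseteq> B'" "B' \<subset> B" for B'
      using that min BA by (auto simp: S_def)
    then have meets_T: "\<exists>t\<in>T - {y}. reach_in E (B - {y}) z t" if "z \<in> B - {y}" for z
      using minimal_connected_Diff_meets[OF B TB yB that] by blast
    show ?thesis unfolding eq
      using meets_T xT by (intro connected_in_insert) (fastforce simp: insert_commute)
  qed
  moreover have "connected_in E (insert x B)"
  proof (rule connected_in_insert)
    fix u assume "u \<in> B"
    then have "reach_in E B u t \<and> {t, x} \<in> E"
      using B TB t xT[OF t] by (auto simp: connected_in_iff insert_commute)
    then show "\<exists>t. reach_in E B u t \<and> {t, x} \<in> E" ..
  qed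
  ultimately show ?thesis
    using that[OF TB BA] unfolding nonseparable_induced_iff by blast
qed

lemma nonseparable_subgraph_in_block:
  assumes G: "graph V E" and "subgraph W F V E" "nonseparable W F"
  obtains W' F' where "block W' F' V E" "W \<subseteq> W'" "F \<subseteq> F'"
proof -
  define S where "S = {p. subgraph (fst p) (snd p) V E \<and> nonseparable (fst p) (snd p)}"
  have "finite E" using G finite_subset[of E "Pow V"] by (auto simp: graph_def)
  then have "finite (Pow V \<times> Pow E)" using G by (simp add: graph_def)
  moreover have "S \<subseteq> Pow V \<times> Pow E" by (auto simp: S_def subgraph_def)
  ultimately have "finite S" by (rule finite_subset[rotated])
  moreover have "(W, F) \<in> S" using assms by (simp add: S_def)
  ultimately obtain m where "m \<in> S" "(W, F) \<le> m" and max: "\<forall>b\<in>S. m \<le> b \<longrightarrow> m = b"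
    using finite_has_maximal2 by blast
  moreover have "block (fst m) (snd m) V E"
    using \<open>m \<in> S\<close> max by (fastforce simp: block_def S_def less_eq_prod_def)
  ultimately show ?thesis using that by (auto simp: less_eq_prod_def)
qed

lemma degree_le_2_if_cactus_block:
  assumes "cactus V E" "block W F V E" "x \<in> W"
  shows "degree F x \<le> 2"
proof -
  have "is_cycle_graph W F \<or> is_single_edge W F \<or> is_single_vertex W F"
    using assms(1,2) by (simp add: cactus_def)
  then show ?thesis
  proof (elim disjE)
    assume "is_cycle_graph W F"
    then show ?thesis using assms(3) by (simp add: is_cycle_graph_def)
  next
    assume "is_single_edge W F"
    then have sub: "{u. {x, u} \<in> F} \<subseteq> W" and W: "card W = 2" by (auto simp: is_single_edge_def)
    then have "finite W" by (intro card_ge_0_finite) simp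
    then show ?thesis unfolding degree_def using card_mono[OF _ sub] W by simp
  next
    assume "is_single_vertex W F"
    then show ?thesis by (simp add: is_single_vertex_def degree_def)
  qed
qed

text \<open>Three neighbours of x in a connected set A would put x, together with three of its edges,
  into a nonseparable subgraph and hence into a single block.\<close>
lemma cactus_nbrs_in_connected_le_2:
  assumes cactus: "cactus V E" and AV: "A \<subseteq> V" and x: "x \<notin> A" and A: "connected_in E A"
  shows "card (nbrs E x \<inter> A) \<le> 2"
proof (rule ccontr)
  have G: "graph V E" using cactus by (simp add: cactus_def)
  then have finA: "finite A" using AV finite_subset by (auto simp: graph_def)
  assume "\<not> ?thesis"
  then have "3 \<le> card (nbrs E x \<inter> A)" by simp
  then obtain T where TA: "T \<subseteq> nbrs E x \<inter> A" and T3: "card T = 3"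
    by (rule obtain_subset_with_card_n)
  then have "T \<noteq> {}" by auto
  then obtain B where TB: "T \<subseteq> B" and BA: "B \<subseteq> A"
    and ns: "nonseparable (insert x B) (induced_edges E (insert x B))"
    using nonseparable_insert_minimal_connected[OF finA A _ _ x] TA by (auto simp: nbrs_def)
  have edge_V: "{x, u} \<in> E \<Longrightarrow> x \<in> V \<and> u \<in> V" for u using G by (auto simp: graph_def)
  moreover obtain t where "t \<in> T" using \<open>T \<noteq> {}\<close> by blast
  ultimately have "x \<in> V" using TA by (auto simp: nbrs_def)
  then have "subgraph (insert x B) (induced_edges E (insert x B)) V E"
    using BA AV by (auto simp: subgraph_def induced_edges_def)
  then obtain W F where blk: "block W F V E" and "insert x B \<subseteq> W"
    and sub: "induced_edges E (insert x B) \<subseteq> F"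
    using nonseparable_subgraph_in_block[OF G _ ns] by blast
  then have "degree F x \<le> 2" using degree_le_2_if_cactus_block[OF cactus blk] by blast
  have "F \<subseteq> E" using blk by (simp add: block_def subgraph_def)
  then have "{u. {x, u} \<in> F} \<subseteq> V" using edge_V by auto
  then have "finite {u. {x, u} \<in> F}" using G finite_subset by (auto simp: graph_def)
  moreover have "T \<subseteq> {u. {x, u} \<in> F}"
  proof
    fix t assume "t \<in> T"
    then have "{x, t} \<in> induced_edges E (insert x B)" using TA TB by (auto simp: nbrs_def)
    then show "t \<in> {u. {x, u} \<in> F}" using sub by blast
  qed
  ultimately have "card T \<le> degree F x" unfolding degree_def by (rule card_mono)
  then show False using T3 \<open>degree F x \<le> 2\<close> by simp
qed

section \<open>Deletion sets with capacities\<close>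

lemma card_2_obtain_other:
  assumes "card S = 2" "b \<in> S"
  obtains a where "a \<noteq> b" "S = {a, b}"
proof -
  have "card (S - {b}) = 1" using assms by simp
  then obtain a where "S - {b} = {a}" by (rule card_1_singletonE)
  then show ?thesis using that assms(2) by blast
qed

lemma sum_fun_upd_diff:
  fixes c :: "'b \<Rightarrow> nat"
  assumes "finite A" "y \<in> A" "m \<le> c y"
  shows "sum (c(y := c y - m)) A + m = sum c A"
proof -
  have "sum (c(y := c y - m)) (A - {y}) = sum c (A - {y})" by (rule sum.cong) auto
  then show ?thesis using assms by (simp add: sum.remove)
qed

locale two_attachment_graph =
  fixes V :: "'a set" and E :: "'a set set"
  assumes finite_V: "finite V"
    and no_loop: "\<And>x. {x} \<notin> E"
    and nbrs_in_connected_le_2: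
      "\<And>A x. A \<subseteq> V \<Longrightarrow> x \<notin> A \<Longrightarrow> connected_in E A \<Longrightarrow> card (nbrs E x \<inter> A) \<le> 2"
begin

definition deg_in :: "'a set \<Rightarrow> 'a \<Rightarrow> nat" where
  "deg_in U x = card (nbrs E x \<inter> U)"

definition deletion_set :: "'a set \<Rightarrow> ('a \<Rightarrow> nat) \<Rightarrow> 'a set \<Rightarrow> bool" where
  "deletion_set U c D \<longleftrightarrow> D \<subseteq> U \<and> (\<forall>x\<in>U - D. deg_in (U - D) x \<le> c x)"

definition small_deletion_set :: "nat \<Rightarrow> 'a set \<Rightarrow> ('a \<Rightarrow> nat) \<Rightarrow> 'a set \<Rightarrow> bool" where
  "small_deletion_set k U c D \<longleftrightarrow>
     deletion_set U c D \<and> (k + 1) * card D + sum c U < (k + 1) * card U"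

lemma nbrs_sym: "y \<in> nbrs E x \<longleftrightarrow> x \<in> nbrs E y"
  by (simp add: nbrs_def insert_commute)

lemma nbr_neq: "y \<in> nbrs E x \<Longrightarrow> y \<noteq> x"
  using no_loop by (auto simp: nbrs_def)

lemma deg_in_le_card: "nbrs E x \<inter> A \<subseteq> S \<Longrightarrow> finite S \<Longrightarrow> deg_in A x \<le> card S"
  unfolding deg_in_def by (rule card_mono)

lemma deg_in_mono: "A \<subseteq> B \<Longrightarrow> finite B \<Longrightarrow> deg_in A x \<le> deg_in B x"
  unfolding deg_in_def by (rule card_mono) auto

lemma deg_in_le_2:
  assumes "U \<subseteq> V" "x \<in> U" "connected_in E (U - {x})"
  shows "deg_in U x \<le> 2"
proof -
  have "nbrs E x \<inter> U = nbrs E x \<inter> (U - {x})" using nbr_neq by blast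
  moreover have "U - {x} \<subseteq> V" using assms(1) by blast
  ultimately show ?thesis using assms nbrs_in_connected_le_2[of "U - {x}" x] by (simp add: deg_in_def)
qed

lemma small_deletion_set_empty:
  assumes "finite U" "U \<noteq> {}" "\<forall>x\<in>U. c x \<le> k" "\<forall>x\<in>U. deg_in U x \<le> c x"
  shows "small_deletion_set k U c {}"
proof -
  have "sum c U \<le> card U * k" using assms(3) sum_bounded_above by (metis of_nat_id)
  moreover have "card U > 0" using assms(1,2) by (simp add: card_gt_0_iff)
  ultimately have "sum c U < (k + 1) * card U" by (simp add: algebra_simps)
  then show ?thesis using assms(4) by (simp add: small_deletion_set_def deletion_set_def)
qed

lemma small_deletion_set_Un:
  assumes "small_deletion_set k A c DA" "small_deletion_set k B c DB"
    and "finite A" "finite B" "A \<inter> B = {}"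
    and no_edge: "\<And>x y. x \<in> A \<Longrightarrow> y \<in> B \<Longrightarrow> {x, y} \<notin> E"
  shows "small_deletion_set k (A \<union> B) c (DA \<union> DB)"
proof -
  have sub: "DA \<subseteq> A" "DB \<subseteq> B" and fine: "\<forall>x\<in>A - DA. deg_in (A - DA) x \<le> c x"
    "\<forall>x\<in>B - DB. deg_in (B - DB) x \<le> c x"
    using assms(1,2) by (auto simp: small_deletion_set_def deletion_set_def)
  have "deg_in (A \<union> B - (DA \<union> DB)) x \<le> c x" if x: "x \<in> A \<union> B - (DA \<union> DB)" for x
  proof -
    have "nbrs E x \<inter> (A \<union> B - (DA \<union> DB)) = nbrs E x \<inter> (A - DA)" if "x \<in> A"
      using that no_edge assms(5) sub by (auto simp: nbrs_def)
    moreover have "nbrs E x \<inter> (A \<union> B - (DA \<union> DB)) = nbrs E x \<inter> (B - DB)" if "x \<in> B"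
      using that no_edge assms(5) sub by (auto simp: nbrs_def insert_commute)
    ultimately show ?thesis using x fine by (auto simp: deg_in_def)
  qed
  moreover have "card (DA \<union> DB) = card DA + card DB"
    using sub assms(3-5) by (intro card_Un_disjoint) (auto intro: finite_subset)
  ultimately show ?thesis
    using assms sub by (auto simp: small_deletion_set_def deletion_set_def card_Un_disjoint
        sum.union_disjoint algebra_simps)
qed

text \<open>Solve the smaller instance on U - (X \<union> Y) with capacities c',
  then delete X as well. The vertices of Y are kept; each old vertex x must have room in c x
  for its neighbours in Y.\<close>
lemma deletion_set_extend:
  assumes U: "finite U" "X \<union> Y \<subseteq> U" and U': "U' = U - (X \<union> Y)"
    and D': "deletion_set U' c' D'"
    and old: "\<And>x. x \<in> U' - D' \<Longrightarrow> c' x + card (nbrs E x \<inter> Y) \<le> c x"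
    and new: "\<And>y. y \<in> Y \<Longrightarrow> deg_in (U - X) y \<le> c y"
  shows "deletion_set U c (D' \<union> X)"
proof -
  have D'U: "D' \<subseteq> U'" using D' by (simp add: deletion_set_def)
  have "deg_in (U - (D' \<union> X)) x \<le> c x" if x: "x \<in> U - (D' \<union> X)" for x
  proof (cases "x \<in> Y")
    case True
    have "deg_in (U - (D' \<union> X)) x \<le> deg_in (U - X) x" using U by (intro deg_in_mono) auto
    then show ?thesis using new[OF True] by simp
  next
    case False
    then have x': "x \<in> U' - D'" using x U' by blast
    have "nbrs E x \<inter> (U - (D' \<union> X)) \<subseteq> (nbrs E x \<inter> (U' - D')) \<union> (nbrs E x \<inter> Y)"
      using U' by blast
    then have "deg_in (U - (D' \<union> X)) x \<le> card ((nbrs E x \<inter> (U' - D')) \<union> (nbrs E x \<inter> Y))"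
      using U U' by (intro deg_in_le_card) (auto intro: finite_subset)
    also have "\<dots> \<le> deg_in (U' - D') x + card (nbrs E x \<inter> Y)"
      unfolding deg_in_def by (rule card_Un_le)
    also have "deg_in (U' - D') x \<le> c' x" using D' x' by (simp add: deletion_set_def)
    finally show ?thesis using old[OF x'] by simp
  qed
  then show ?thesis using D'U U U' by (auto simp: deletion_set_def)
qed

text \<open>e = 1 when the smaller instance is solved by induction, e = 0 when it may be empty.\<close>
lemma small_deletion_set_extend:
  assumes U: "finite U" "X \<union> Y \<subseteq> U" "X \<inter> Y = {}" and U': "U' = U - (X \<union> Y)"
    and D': "deletion_set U' c' D'"
    and cost: "(k + 1) * card D' + sum c' U' + e \<le> (k + 1) * card U'"
    and budget: "sum c U' + sum c X + sum c Y < sum c' U' + (k + 1) * card Y + e"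
    and old: "\<And>x. x \<in> U' - D' \<Longrightarrow> c' x + card (nbrs E x \<inter> Y) \<le> c x"
    and new: "\<And>y. y \<in> Y \<Longrightarrow> deg_in (U - X) y \<le> c y"
  shows "small_deletion_set k U c (D' \<union> X)"
proof -
  have fin: "finite U'" "finite X" "finite Y" using U U' finite_subset by auto
  have D'U: "D' \<subseteq> U'" using D' by (simp add: deletion_set_def)
  have "card (D' \<union> X) = card D' + card X"
    using D'U fin U' by (intro card_Un_disjoint) (auto intro: finite_subset)
  moreover have "card U = card U' + card X + card Y"
    using U U' fin card_mono[OF U(1,2)] by (simp add: card_Diff_subset card_Un_disjoint)
  moreover have "sum c U = sum c U' + sum c X + sum c Y"
    using U U' fin by (simp add: sum.subset_diff[of "X \<union> Y" U] sum.union_disjoint)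
  ultimately have "(k + 1) * card (D' \<union> X) + sum c U < (k + 1) * card U"
    using cost budget by (simp add: algebra_simps)
  then show ?thesis
    using deletion_set_extend[OF U(1,2) U' D' old new] by (simp add: small_deletion_set_def)
qed

context
  fixes k :: nat and U :: "'a set"
  assumes U_V: "U \<subseteq> V"
    and ih: "\<And>U' c'. U' \<subset> U \<Longrightarrow> U' \<noteq> {} \<Longrightarrow> \<forall>x\<in>U'. c' x \<le> k \<Longrightarrow>
      \<exists>D. small_deletion_set k U' c' D"
begin

lemma finite_U: "finite U"
  using U_V finite_V finite_subset by blast

lemma exists_deletion_set_below:
  assumes "U' \<subset> U" "\<forall>x\<in>U'. c' x \<le> k"
  obtains D where "deletion_set U' c' D" "(k + 1) * card D + sum c' U' \<le> (k + 1) * card U'"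
proof (cases "U' = {}")
  case True
  then show ?thesis using that[of "{}"] by (simp add: deletion_set_def)
next
  case False
  then obtain D where "small_deletion_set k U' c' D" using ih assms by blast
  then show ?thesis using that[of D] by (simp add: small_deletion_set_def)
qed

lemma reduce_disconnected:
  assumes cap: "\<forall>x\<in>U. c x \<le> k" and u: "u \<in> U" and w: "w \<in> U" and uw: "\<not> reach_in E U u w"
  shows "\<exists>D. small_deletion_set k U c D"
proof -
  define A where "A = component_in E U u"
  have AU: "A \<subseteq> U" unfolding A_def using u by (rule component_in_subset)
  have "u \<in> A" "w \<notin> A" using uw by (auto simp: A_def)
  then obtain DA DB where "small_deletion_set k A c DA" "small_deletion_set k (U - A) c DB"
    using ih[of A c] ih[of "U - A" c] AU u w cap by blast
  moreover have "{x, y} \<notin> E" if x: "x \<in> A" and y: "y \<in> U - A" for x y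
  proof
    assume "{x, y} \<in> E"
    then have "reach_in E U x y" using x y AU by (intro reach_in_edge) auto
    then have "reach_in E U u y" using x reach_in_trans by (auto simp: A_def)
    then show False using y by (simp add: A_def)
  qed
  ultimately have "small_deletion_set k (A \<union> (U - A)) c (DA \<union> DB)"
    using finite_U AU by (intro small_deletion_set_Un) (auto intro: finite_subset)
  moreover have "A \<union> (U - A) = U" using AU by blast
  ultimately show ?thesis by auto
qed

lemma reduce_saturated_vertex:
  assumes cap: "\<forall>x\<in>U. c x \<le> k" and x: "x \<in> U" "c x = 0" and y: "y \<in> nbrs E x \<inter> U"
  shows "\<exists>D. small_deletion_set k U c D"
proof -
  have "U - {x} \<subset> U" "U - {x} \<noteq> {}" using x y nbr_neq by auto
  then obtain D' where "small_deletion_set k (U - {x}) c D'" using ih cap by blast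
  then have "small_deletion_set k U c (D' \<union> {x})"
    using finite_U x
    by (intro small_deletion_set_extend[where Y = "{}" and c' = c and e = 1])
      (auto simp: small_deletion_set_def)
  then show ?thesis ..
qed

text \<open>If v can absorb its m neighbours in C, pass to U - C with the capacity of v lowered by m;
  otherwise delete v, which pays for itself because m \<le> card C.\<close>
lemma reduce_pendant:
  assumes cap: "\<forall>x\<in>U. c x \<le> k" and v: "v \<in> U" and C: "C \<subseteq> U - {v}" "C \<noteq> {}"
    and closed: "\<And>x y. x \<in> C \<Longrightarrow> y \<in> U \<Longrightarrow> {x, y} \<in> E \<Longrightarrow> y \<in> insert v C"
    and fine: "\<And>x. x \<in> C \<Longrightarrow> deg_in U x \<le> c x"
  shows "\<exists>D. small_deletion_set k U c D"
proof -
  define m where "m = card (nbrs E v \<inter> C)"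
  have finC: "finite C" using C finite_U finite_subset by blast
  have m_C: "m \<le> card C" unfolding m_def using finC by (intro card_mono) auto
  have sum_C: "sum c C \<le> k * card C"
    using cap C sum_bounded_above[of C c k] by (auto simp: mult.commute)
  have no_nbr: "nbrs E x \<inter> C = {}" if "x \<in> U - insert v C" for x
    using that closed by (fastforce simp: nbrs_def insert_commute)
  show ?thesis
  proof (cases "m \<le> c v")
    case True
    define c' where "c' = c(v := c v - m)"
    have "U - C \<subset> U" "U - C \<noteq> {}" "\<forall>x\<in>U - C. c' x \<le> k"
      using C v cap by (auto simp: c'_def)
    then obtain D' where D': "small_deletion_set k (U - C) c' D'" using ih by blast
    have sum_c': "sum c' (U - C) + m = sum c (U - C)"
      unfolding c'_def using finite_U v C True by (intro sum_fun_upd_diff) auto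
    have old: "c' x + card (nbrs E x \<inter> C) \<le> c x" if "x \<in> U - C - D'" for x
      using that True no_nbr[of x] by (cases "x = v") (auto simp: c'_def m_def)
    have "small_deletion_set k U c (D' \<union> {})"
    proof (rule small_deletion_set_extend[where Y = C and U' = "U - C" and c' = c' and e = 1])
      show "(k + 1) * card D' + sum c' (U - C) + 1 \<le> (k + 1) * card (U - C)"
        using D' by (simp add: small_deletion_set_def)
      show "sum c (U - C) + sum c {} + sum c C < sum c' (U - C) + (k + 1) * card C + 1"
        using sum_c' m_C sum_C by simp
    qed (use finite_U C D' old fine in \<open>auto simp: small_deletion_set_def\<close>)
    then show ?thesis ..
  next
    case False
    have new: "deg_in (U - {v}) y \<le> c y" if "y \<in> C" for y
      using fine[OF that] deg_in_mono[of "U - {v}" U y] finite_U by force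
    have "U - insert v C \<subset> U" using v by blast
    then obtain D' where D': "deletion_set (U - insert v C) c D'"
      and cost: "(k + 1) * card D' + sum c (U - insert v C) \<le> (k + 1) * card (U - insert v C)"
      using exists_deletion_set_below[of "U - insert v C" c] cap by auto
    have "small_deletion_set k U c (D' \<union> {v})"
    proof (rule small_deletion_set_extend[where Y = C and U' = "U - insert v C" and c' = c and e = 0])
      show "sum c (U - insert v C) + sum c {v} + sum c C
        < sum c (U - insert v C) + (k + 1) * card C + 0"
        using False m_C sum_C by simp
    qed (use finite_U v C D' cost no_nbr new in auto)
    then show ?thesis ..
  qed
qed

text \<open>A vertex w of capacity 1 between a and b: delete a, keep w, and let b pay for w.\<close>
lemma reduce_path_low:
  assumes cap: "\<forall>x\<in>U. c x \<le> k" and w: "w \<in> U" "c w = 1"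
    and nbrs_w: "nbrs E w \<inter> U = {a, b}" "a \<noteq> b" and a: "c a < k" and b: "1 \<le> c b"
  shows "\<exists>D. small_deletion_set k U c D"
proof -
  have ab: "a \<in> U" "b \<in> U" "a \<noteq> w" "b \<noteq> w" using nbrs_w nbr_neq by auto
  define c' where "c' = c(b := c b - 1)"
  have "U - {a, w} \<subset> U" "U - {a, w} \<noteq> {}" "\<forall>x\<in>U - {a, w}. c' x \<le> k"
    using ab w cap nbrs_w by (auto simp: c'_def)
  then obtain D' where D': "small_deletion_set k (U - {a, w}) c' D'" using ih by blast
  have sum_c': "sum c' (U - {a, w}) + 1 = sum c (U - {a, w})"
    unfolding c'_def using finite_U ab b nbrs_w(2) by (intro sum_fun_upd_diff) auto
  have old: "c' x + card (nbrs E x \<inter> {w}) \<le> c x" if "x \<in> U - {a, w}" for x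
  proof (cases "x = b")
    case False
    then have "w \<notin> nbrs E x" using that nbrs_w by (auto simp: nbrs_sym[of w x])
    then show ?thesis using False by (simp add: c'_def)
  next
    case True
    have "card (nbrs E x \<inter> {w}) \<le> card {w}" by (rule card_mono) auto
    then show ?thesis using True b by (simp add: c'_def)
  qed
  have "nbrs E w \<inter> (U - {a}) = {b}" using nbrs_w ab by auto
  then have new: "deg_in (U - {a}) w \<le> c w" using w by (simp add: deg_in_def)
  have "small_deletion_set k U c (D' \<union> {a})"
  proof (rule small_deletion_set_extend[where Y = "{w}" and U' = "U - {a, w}" and c' = c' and e = 1])
    show "(k + 1) * card D' + sum c' (U - {a, w}) + 1 \<le> (k + 1) * card (U - {a, w})"
      using D' by (simp add: small_deletion_set_def)
    show "sum c (U - {a, w}) + sum c {a} + sum c {w} < sum c' (U - {a, w}) + (k + 1) * card {w} + 1"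
      using sum_c' a w by simp
  qed (use finite_U ab w D' old new in \<open>auto simp: small_deletion_set_def\<close>)
  then show ?thesis ..
qed

text \<open>A triangle a, w, b in which w and b have no further neighbours: deleting a suffices.\<close>
lemma reduce_triangle:
  assumes cap: "\<forall>x\<in>U. c x \<le> k" and w: "w \<in> U" "c w = 1"
    and nbrs_w: "nbrs E w \<inter> U = {a, b}" "a \<noteq> b"
    and nbrs_b: "nbrs E b \<inter> U = {w, a}" and b: "1 \<le> c b"
  shows "\<exists>D. small_deletion_set k U c D"
proof -
  have ab: "a \<in> U" "b \<in> U" "a \<noteq> w" "b \<noteq> w" using nbrs_w nbr_neq by auto
  let ?U' = "U - {a, w, b}"
  have "?U' \<subset> U" using w by blast
  then obtain D' where D': "deletion_set ?U' c D'"
    and cost: "(k + 1) * card D' + sum c ?U' \<le> (k + 1) * card ?U'"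
    using exists_deletion_set_below cap by blast
  have old: "nbrs E x \<inter> {w, b} = {}" if "x \<in> ?U'" for x
    using that nbrs_w nbrs_b by (auto simp: nbrs_sym[of _ x])
  have "nbrs E w \<inter> (U - {a}) = {b}" "nbrs E b \<inter> (U - {a}) = {w}" using nbrs_w nbrs_b ab by auto
  then have new: "deg_in (U - {a}) w \<le> c w" "deg_in (U - {a}) b \<le> c b"
    using w b by (simp_all add: deg_in_def)
  have "small_deletion_set k U c (D' \<union> {a})"
  proof (rule small_deletion_set_extend[where Y = "{w, b}" and U' = ?U' and c' = c and e = 0])
    show "sum c ?U' + sum c {a} + sum c {w, b} < sum c ?U' + (k + 1) * card {w, b} + 0"
      using ab w cap[rule_format, of a] cap[rule_format, of b] by simp
  qed (use finite_U ab w D' cost old new nbrs_w(2) in auto)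
  then show ?thesis ..
qed

text \<open>As in the previous two lemmas, but b has capacity at least 2 and one further neighbour
  y; delete a, keep w and b, and let y pay for b.\<close>
lemma reduce_path_full:
  assumes cap: "\<forall>x\<in>U. c x \<le> k" and w: "w \<in> U" "c w = 1"
    and nbrs_w: "nbrs E w \<inter> U = {a, b}" "a \<noteq> b"
    and nbrs_b: "nbrs E b \<inter> U = {w, y}" "w \<noteq> y" "y \<noteq> a" and b: "2 \<le> c b" and y: "1 \<le> c y"
  shows "\<exists>D. small_deletion_set k U c D"
proof -
  have ab: "a \<in> U" "b \<in> U" "a \<noteq> w" "b \<noteq> w" using nbrs_w nbr_neq by auto
  let ?U' = "U - {a, w, b}"
  have yU': "y \<in> ?U'" using nbrs_b nbr_neq by auto
  define c' where "c' = c(y := c y - 1)"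
  have "?U' \<subset> U" "?U' \<noteq> {}" "\<forall>x\<in>?U'. c' x \<le> k" using w yU' cap by (auto simp: c'_def)
  then obtain D' where D': "small_deletion_set k ?U' c' D'" using ih by blast
  have sum_c': "sum c' ?U' + 1 = sum c ?U'"
    unfolding c'_def using finite_U yU' y by (intro sum_fun_upd_diff) auto
  have old: "c' x + card (nbrs E x \<inter> {w, b}) \<le> c x" if "x \<in> ?U'" for x
  proof -
    have "w \<notin> nbrs E x" using that nbrs_w by (auto simp: nbrs_sym[of w x])
    moreover have "b \<in> nbrs E x \<longleftrightarrow> x = y" using that nbrs_b yU' by (auto simp: nbrs_sym[of b x])
    ultimately show ?thesis using y by (cases "x = y") (auto simp: c'_def)
  qed
  have "nbrs E w \<inter> (U - {a}) = {b}" using nbrs_w ab by auto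
  then have new_w: "deg_in (U - {a}) w \<le> c w" using w by (simp add: deg_in_def)
  have "deg_in (U - {a}) b \<le> card {w, y}" using nbrs_b by (intro deg_in_le_card) auto
  then have new_b: "deg_in (U - {a}) b \<le> c b" using b nbrs_b(2) by simp
  have "small_deletion_set k U c (D' \<union> {a})"
  proof (rule small_deletion_set_extend[where Y = "{w, b}" and U' = ?U' and c' = c' and e = 1])
    show "(k + 1) * card D' + sum c' ?U' + 1 \<le> (k + 1) * card ?U'"
      using D' by (simp add: small_deletion_set_def)
    show "sum c ?U' + sum c {a} + sum c {w, b} < sum c' ?U' + (k + 1) * card {w, b} + 1"
      using sum_c' ab w cap[rule_format, of a] cap[rule_format, of b] by simp
  qed (use finite_U ab w D' old new_w new_b nbrs_w(2) in \<open>auto simp: small_deletion_set_def\<close>)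
  then show ?thesis ..
qed

lemma reduce_degree_two:
  assumes k: "2 \<le> k" and cap: "\<forall>x\<in>U. c x \<le> k" and pos: "\<forall>x\<in>U. 1 \<le> c x"
    and deg2: "\<forall>x\<in>U. 2 \<le> deg_in U x"
    and w: "w \<in> U" "c w < deg_in U w" "deg_in U w \<le> 2"
    and b: "b \<in> nbrs E w \<inter> U" "deg_in U b \<le> 2"
  shows "\<exists>D. small_deletion_set k U c D"
proof -
  have "2 \<le> deg_in U w" "1 \<le> c w" using deg2 pos w by auto
  then have cw: "c w = 1" and card_w: "card (nbrs E w \<inter> U) = 2"
    using w by (auto simp: deg_in_def)
  obtain a where ab: "a \<noteq> b" and nbrs_w: "nbrs E w \<inter> U = {a, b}"
    using card_w b(1) by (rule card_2_obtain_other)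
  have aU: "a \<in> U" and bU: "b \<in> U" using nbrs_w by auto
  consider "c a < k" | "c b < k" | "c b = k" using cap bU by fastforce
  then show ?thesis
  proof cases
    case 1
    from reduce_path_low[OF cap w(1) cw nbrs_w ab this] show ?thesis using pos bU by simp
  next
    case 2
    have "nbrs E w \<inter> U = {b, a}" using nbrs_w by auto
    from reduce_path_low[OF cap w(1) cw this ab[symmetric] 2] show ?thesis using pos aU by simp
  next
    case 3
    have "2 \<le> deg_in U b" using deg2 bU by blast
    then have "card (nbrs E b \<inter> U) = 2" using b(2) by (simp add: deg_in_def)
    moreover have "w \<in> nbrs E b \<inter> U" using b(1) w(1) nbrs_sym by blast
    ultimately obtain y where "y \<noteq> w" and "nbrs E b \<inter> U = {y, w}" by (rule card_2_obtain_other)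
    then have nbrs_b: "nbrs E b \<inter> U = {w, y}" "w \<noteq> y" by auto
    show ?thesis
    proof (cases "y = a")
      case True
      then show ?thesis using reduce_triangle[OF cap w(1) cw nbrs_w ab] nbrs_b pos bU by simp
    next
      case False
      then show ?thesis using reduce_path_full[OF cap w(1) cw nbrs_w ab nbrs_b] 3 k pos nbrs_b by auto
    qed
  qed
qed

lemma reduce_min_degree_two:
  assumes k: "2 \<le> k" and cap: "\<forall>x\<in>U. c x \<le> k" and pos: "\<forall>x\<in>U. 1 \<le> c x"
    and U: "connected_in E U" and deg2: "\<forall>x\<in>U. 2 \<le> deg_in U x"
    and w0: "w0 \<in> U" "c w0 < deg_in U w0"
  shows "\<exists>D. small_deletion_set k U c D"
proof (cases "\<forall>x\<in>U. connected_in E (U - {x})")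
  case True
  then have deg_le_2: "deg_in U x \<le> 2" if "x \<in> U" for x
    using deg_in_le_2[OF U_V that] that by blast
  have "nbrs E w0 \<inter> U \<noteq> {}" using w0 by (auto simp: deg_in_def)
  then obtain b where "b \<in> nbrs E w0 \<inter> U" by blast
  then show ?thesis
    using reduce_degree_two[OF k cap pos deg2 w0 deg_le_2[OF w0(1)]] deg_le_2 by blast
next
  case False
  then obtain v0 where "v0 \<in> U" "\<not> connected_in E (U - {v0})" by blast
  then obtain v C where v: "v \<in> U" and C: "C \<noteq> {}" "C \<subseteq> U - {v}"
    and closed: "\<And>x y. x \<in> C \<Longrightarrow> y \<in> U \<Longrightarrow> {x, y} \<in> E \<Longrightarrow> y \<in> insert v C"
    and no_cut: "\<And>x. x \<in> C \<Longrightarrow> connected_in E (U - {x})"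
    using exists_end_component[OF finite_U U] by blast
  have deg_le_2: "deg_in U x \<le> 2" if "x \<in> C" for x
    using deg_in_le_2[OF U_V _ no_cut[OF that]] that C by blast
  show ?thesis
  proof (cases "\<forall>x\<in>C. deg_in U x \<le> c x")
    case True
    show ?thesis
      by (rule reduce_pendant[OF cap v C(2,1)]) (use closed True in auto)
  next
    case False
    then obtain w where w: "w \<in> C" "c w < deg_in U w" by (auto simp: not_le)
    have "\<not> nbrs E w \<inter> U \<subseteq> {v}"
    proof
      assume "nbrs E w \<inter> U \<subseteq> {v}"
      then have "deg_in U w \<le> 1" using deg_in_le_card[of w U "{v}"] by simp
      then show False using deg2 w C by fastforce
    qed
    then obtain b where b: "b \<in> nbrs E w \<inter> U" "b \<noteq> v" by blast
    then have "b \<in> C" using closed[OF w(1)] by (auto simp: nbrs_def)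
    then show ?thesis
      using reduce_degree_two[OF k cap pos deg2 _ w(2) deg_le_2[OF w(1)] b(1)] w(1) C deg_le_2
      by blast
  qed
qed

lemma reduce_leaf:
  assumes cap: "\<forall>x\<in>U. c x \<le> k" and x: "x \<in> U" "deg_in U x = 1" "1 \<le> c x"
  shows "\<exists>D. small_deletion_set k U c D"
proof -
  have "card (nbrs E x \<inter> U) = 1" using x by (simp add: deg_in_def)
  then obtain y where nbrs_x: "nbrs E x \<inter> U = {y}" by (rule card_1_singletonE)
  then have "y \<in> U" "y \<noteq> x" using nbr_neq by auto
  then show ?thesis
    using reduce_pendant[OF cap, of y "{x}"] x nbrs_x by (auto simp: nbrs_def)
qed

lemma small_deletion_set_step:
  assumes k: "2 \<le> k" and "U \<noteq> {}" and cap: "\<forall>x\<in>U. c x \<le> k"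
  shows "\<exists>D. small_deletion_set k U c D"
proof (cases "\<forall>x\<in>U. deg_in U x \<le> c x")
  case True
  then show ?thesis using small_deletion_set_empty[OF finite_U] assms by blast
next
  case False
  then obtain w0 where w0: "w0 \<in> U" "c w0 < deg_in U w0" by (auto simp: not_le)
  show ?thesis
  proof (cases "connected_in E U")
    case False
    then show ?thesis using reduce_disconnected cap by (auto simp: connected_in_iff)
  next
    case connected: True
    have has_nbr: "nbrs E x \<inter> U \<noteq> {}" if "x \<in> U" for x
      using connected_in_nbrs_nonempty[OF connected that w0(1)] w0 by (cases "x = w0") (auto simp: deg_in_def)
    show ?thesis
    proof (cases "\<exists>x\<in>U. c x = 0")
      case True
      then show ?thesis using reduce_saturated_vertex cap has_nbr by blast
    next
      case False
      then have pos: "\<forall>x\<in>U. 1 \<le> c x" by (simp add: Suc_le_eq)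
      show ?thesis
      proof (cases "\<exists>x\<in>U. deg_in U x = 1")
        case True
        then show ?thesis using reduce_leaf cap pos by blast
      next
        case False
        have "2 \<le> deg_in U x" if "x \<in> U" for x
        proof -
          have "deg_in U x \<noteq> 0" using has_nbr[OF that] finite_U by (simp add: deg_in_def)
          moreover have "deg_in U x \<noteq> 1" using False that by blast
          ultimately show ?thesis by linarith
        qed
        then show ?thesis using reduce_min_degree_two[OF k cap pos connected] w0 by blast
      qed
    qed
  qed
qed

end

theorem exists_small_deletion_set:
  assumes k: "2 \<le> k" and "U \<subseteq> V" "U \<noteq> {}" "\<forall>x\<in>U. c x \<le> k"
  shows "\<exists>D. small_deletion_set k U c D"
proof -
  have "finite U" using assms(2) finite_V finite_subset by blast
  then show ?thesis using assms(2-4)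
  proof (induction U arbitrary: c rule: finite_psubset_induct)
    case (psubset U)
    have "\<exists>D. small_deletion_set k U' c' D"
      if "U' \<subset> U" "U' \<noteq> {}" "\<forall>x\<in>U'. c' x \<le> k" for U' c'
      using that psubset.IH psubset.prems(1) by (meson psubset_imp_subset subset_trans)
    then show ?case using small_deletion_set_step k psubset.prems by blast
  qed
qed

end

section \<open>The bound for cacti\<close>

lemma cactus_two_attachment_graph:
  assumes "cactus V E"
  shows "two_attachment_graph V E"
proof
  have G: "graph V E" using assms by (simp add: cactus_def)
  then show "finite V" by (simp add: graph_def)
  show "{x} \<notin> E" for x using G by (auto simp: graph_def)
  show "card (nbrs E x \<inter> A) \<le> 2" if "A \<subseteq> V" "x \<notin> A" "connected_in E A" for A x
    using cactus_nbrs_in_connected_le_2[OF assms that] .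
qed

lemma (in two_attachment_graph) k_sparse_Diff_deletion_set:
  assumes "deletion_set V (\<lambda>_. k) D"
  shows "k_sparse k V E (V - D)"
proof -
  have "{u \<in> V - D. {v, u} \<in> E} = nbrs E v \<inter> (V - D)" for v by (auto simp: nbrs_def)
  then show ?thesis using assms by (auto simp: k_sparse_def deletion_set_def deg_in_def)
qed

lemma card_le_alpha_k:
  assumes "finite V" "k_sparse k V E S"
  shows "card S \<le> alpha_k k V E"
proof -
  have "{S. k_sparse k V E S} \<subseteq> Pow V" by (auto simp: k_sparse_def)
  then have "finite (card ` {S. k_sparse k V E S})" using assms(1) finite_subset by blast
  then show ?thesis unfolding alpha_k_def using assms(2) by (intro Max_ge) auto
qed

lemma div_bound_of_small_deletion:
  fixes k n d :: nat
  assumes "(k + 1) * d < n"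
  shows "k * n div (k + 1) + 1 \<le> n - d"
proof -
  have "k * n < (n - d) * (k + 1)"
    using assms by (simp add: diff_mult_distrib algebra_simps)
  then show ?thesis by (simp add: less_mult_imp_div_less Suc_le_eq)
qed

theorem lemma4p4:
  fixes k :: nat and V :: "'a set" and E :: "'a set set"
  assumes "k \<ge> 2" and "cactus V E"
  shows "alpha_k k V E \<ge> (k * card V) div (k + 1) + 1"
proof -
  interpret two_attachment_graph V E using assms(2) by (rule cactus_two_attachment_graph)
  have "V \<noteq> {}" using assms(2) by (simp add: cactus_def graph_def)
  then obtain D where D: "small_deletion_set k V (\<lambda>_. k) D"
    using exists_small_deletion_set[OF assms(1) order_refl, of "\<lambda>_. k"] by auto
  then have DV: "D \<subseteq> V" and "(k + 1) * card D + card V * k < (k + 1) * card V"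
    by (auto simp: small_deletion_set_def deletion_set_def)
  then have "(k + 1) * card D < card V" by (simp add: algebra_simps)
  then have "k * card V div (k + 1) + 1 \<le> card V - card D" by (rule div_bound_of_small_deletion)
  also have "card V - card D = card (V - D)"
    using DV finite_V by (simp add: card_Diff_subset finite_subset)
  also have "card (V - D) \<le> alpha_k k V E"
    using D k_sparse_Diff_deletion_set card_le_alpha_k[OF finite_V]
    by (simp add: small_deletion_set_def)
  finally show ?thesis .
qed

end
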